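(* Let $(\mathcal{X},\mathcal{Y},W)$ be a discrete memoryless channel with finite alphabets and $|\mathcal{X}|\le3$. Then the channel is non-redundant if and only if for all $p,q\in\mathcal{P}(\mathcal{X})$, $W\circ p=W\circ q$ implies $p=q$.
   Context: $\mathcal{P}(\mathcal{X})$ is the set of probability distributions on $\mathcal{X}$; $W_x=W(\cdot|x)$ and $(W\circ p)(y)=\sum_{x}p(x)W(y|x)$. The channel is non-redundant if there exists $\eta>0$ such that for all $x\in\mathcal{X}$ and all $p\in\mathcal{P}(\mathcal{X})$ with $p(x)=0$, $\|W_x-W\circ p\|_1\ge\eta$. *)

theory Defs
  imports Complex_Main "HOL-Library.Cardinality"
begin

definition prob_dist :: "('a::finite \<Rightarrow> real) \<Rightarrow> bool" where
  "prob_dist p \<longleftrightarrow> (\<forall>a. 0 \<le> p a) \<and> (\<Sum>a\<in>UNIV. p a) = 1"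

text \<open>A DMC: W x is the output distribution W(.|x) for each input x.\<close>
definition channel :: "('x::finite \<Rightarrow> 'y::finite \<Rightarrow> real) \<Rightarrow> bool" where
  "channel W \<longleftrightarrow> (\<forall>x. prob_dist (W x))"

definition chan_out :: "('x::finite \<Rightarrow> 'y \<Rightarrow> real) \<Rightarrow> ('x \<Rightarrow> real) \<Rightarrow> 'y \<Rightarrow> real" where
  "chan_out W p = (\<lambda>y. \<Sum>x\<in>UNIV. p x * W x y)"

definition l1_dist :: "('y::finite \<Rightarrow> real) \<Rightarrow> ('y \<Rightarrow> real) \<Rightarrow> real" where
  "l1_dist f g = (\<Sum>y\<in>UNIV. \<bar>f y - g y\<bar>)"

definition non_redundant :: "('x::finite \<Rightarrow> 'y::finite \<Rightarrow> real) \<Rightarrow> bool" where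
  "non_redundant W \<longleftrightarrow> (\<exists>\<eta>>0. \<forall>x p. prob_dist p \<and> p x = 0 \<longrightarrow> \<eta> \<le> l1_dist (W x) (chan_out W p))"

end

theory Submission
  imports Defs "HOL-Analysis.Analysis"
begin

text \<open>If \<open>W \<circ> p = W \<circ> q\<close> with \<open>p \<noteq> q\<close>, the inputs where \<open>p\<close> exceeds \<open>q\<close> and those where
  \<open>q\<close> exceeds \<open>p\<close> form two disjoint nonempty sets; with at most three inputs one of them is a
  single input \<open>x\<close>, and rearranging \<open>\<Sum>\<^sub>a (p a - q a) W\<^sub>a = 0\<close> exhibits \<open>W\<^sub>x\<close> as a mixture of
  the other rows, which non-redundancy forbids. Conversely, injectivity rules out such mixtures
  (\<open>W\<^sub>x\<close> is also the image of the point mass at \<open>x\<close>), and compactness of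
  \<open>{p. p x = 0}\<close> turns this pointwise separation into a uniform gap \<open>\<eta>\<close>.
  Neither direction uses that the rows \<open>W\<^sub>x\<close> are themselves distributions.\<close>

definition mixture_free :: "('x::finite \<Rightarrow> 'y \<Rightarrow> real) \<Rightarrow> bool" where
  "mixture_free W \<longleftrightarrow> (\<forall>x r. prob_dist r \<and> r x = 0 \<longrightarrow> chan_out W r \<noteq> W x)"

lemma l1_dist_eq_0_iff: "l1_dist f g = 0 \<longleftrightarrow> f = g"
  by (auto simp: l1_dist_def sum_nonneg_eq_0_iff)

lemma chan_out_point_mass: "chan_out W (\<lambda>a. if a = x then 1 else 0) = W x"
  by (rule ext) (simp add: chan_out_def mult_delta_left)

lemma prob_dist_neq_imp_ex_less:
  assumes "prob_dist p" "prob_dist q" "p \<noteq> q"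
  obtains a where "p a < q a"
proof -
  have "(\<Sum>a\<in>UNIV. p a - q a) = 0"
    using assms(1,2) by (simp add: prob_dist_def sum_subtractf)
  moreover have "\<exists>a. p a - q a \<noteq> 0"
    using assms(3) by auto
  ultimately have "\<not> (\<forall>a. 0 \<le> p a - q a)"
    using sum_nonneg_eq_0_iff[of UNIV "\<lambda>a. p a - q a"] by auto
  then show thesis
    using that by (auto simp: not_le)
qed

lemma disjoint_nonempty_imp_singleton:
  fixes A B :: "'a::finite set"
  assumes "A \<inter> B = {}" "A \<noteq> {}" "B \<noteq> {}" "CARD('a) \<le> 3"
  shows "(\<exists>a. A = {a}) \<or> (\<exists>b. B = {b})"
proof -
  have "card A + card B = card (A \<union> B)"
    using assms(1) by (simp add: card_Un_disjoint)
  also have "\<dots> \<le> 3"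
    using assms(4) card_mono[of UNIV "A \<union> B"] by simp
  finally have "card A + card B \<le> 3" .
  moreover have "card A \<noteq> 0" "card B \<noteq> 0"
    using assms(2,3) by auto
  ultimately have "card A = 1 \<or> card B = 1"
    by linarith
  then show ?thesis
    by (auto simp: card_1_singleton_iff)
qed

lemma mixture_of_collision:
  fixes W :: "'x::finite \<Rightarrow> 'y \<Rightarrow> real"
  assumes "prob_dist p" "prob_dist q" "chan_out W p = chan_out W q"
    and above: "{a. q a < p a} = {x}"
  shows "\<exists>r. prob_dist r \<and> r x = 0 \<and> chan_out W r = W x"
proof -
  define c where "c = p x - q x"
  have "c > 0"
    using above by (auto simp: c_def)
  have below: "p a \<le> q a" if "a \<noteq> x" for a
    using above that by (metis mem_Collect_eq not_le singletonD)
  define r where "r a = (if a = x then 0 else (q a - p a) / c)" for a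
  have pull_out_x: "(\<Sum>a\<in>UNIV. f a) = f x + (\<Sum>a\<in>UNIV - {x}. f a)" for f :: "'x \<Rightarrow> real"
    by (simp add: sum.remove)
  have r_sum: "(\<Sum>a\<in>UNIV. r a * g a) = (\<Sum>a\<in>UNIV - {x}. (q a - p a) * g a) / c"
    for g :: "'x \<Rightarrow> real"
    by (simp add: pull_out_x r_def sum_divide_distrib)
  have rest: "(\<Sum>a\<in>UNIV - {x}. (q a - p a) * g a) = c * g x"
    if "(\<Sum>a\<in>UNIV. (q a - p a) * g a) = 0" for g :: "'x \<Rightarrow> real"
    using that pull_out_x[of "\<lambda>a. (q a - p a) * g a"] by (simp add: c_def algebra_simps)
  have "(\<Sum>a\<in>UNIV. (q a - p a) * 1) = 0"
    using assms(1,2) by (simp add: prob_dist_def sum_subtractf)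
  then have "(\<Sum>a\<in>UNIV. r a) = 1"
    using r_sum[of "\<lambda>_. 1"] rest[of "\<lambda>_. 1"] \<open>c > 0\<close> by simp
  moreover have "0 \<le> r a" for a
    using below \<open>c > 0\<close> by (simp add: r_def)
  ultimately have "prob_dist r"
    by (simp add: prob_dist_def)
  moreover have "chan_out W r = W x"
  proof
    fix y
    have "(\<Sum>a\<in>UNIV. (q a - p a) * W a y) = 0"
      using fun_cong[OF assms(3), of y]
      by (simp add: chan_out_def left_diff_distrib sum_subtractf)
    then show "chan_out W r y = W x y"
      using r_sum[of "\<lambda>a. W a y"] rest[of "\<lambda>a. W a y"] \<open>c > 0\<close> by (simp add: chan_out_def)
  qed
  ultimately show ?thesis
    by (auto simp: r_def)
qed

lemma mixture_free_imp_chan_out_inj: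
  fixes W :: "'x::finite \<Rightarrow> 'y \<Rightarrow> real"
  assumes "mixture_free W" "CARD('x) \<le> 3"
    and p: "prob_dist p" and q: "prob_dist q" and collision: "chan_out W p = chan_out W q"
  shows "p = q"
proof (rule ccontr)
  assume "p \<noteq> q"
  then obtain a b where "q a < p a" "p b < q b"
    using prob_dist_neq_imp_ex_less[OF q p] prob_dist_neq_imp_ex_less[OF p q] by metis
  then have "{a. q a < p a} \<inter> {a. p a < q a} = {}" "{a. q a < p a} \<noteq> {}" "{a. p a < q a} \<noteq> {}"
    by auto
  then have "(\<exists>x. {a. q a < p a} = {x}) \<or> (\<exists>x. {a. p a < q a} = {x})"
    using assms(2) by (rule disjoint_nonempty_imp_singleton)
  then obtain x r where "prob_dist r" "r x = 0" "chan_out W r = W x"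
  proof (elim disjE exE)
    fix x
    assume "{a. q a < p a} = {x}"
    with mixture_of_collision[OF p q collision] show thesis
      using that by blast
  next
    fix x
    assume "{a. p a < q a} = {x}"
    with mixture_of_collision[OF q p collision[symmetric]] show thesis
      using that by blast
  qed
  then show False
    using assms(1) by (auto simp: mixture_free_def)
qed

lemma chan_out_inj_imp_mixture_free:
  fixes W :: "'x::finite \<Rightarrow> 'y \<Rightarrow> real"
  assumes inj: "\<forall>p q. prob_dist p \<and> prob_dist q \<and> chan_out W p = chan_out W q \<longrightarrow> p = q"
  shows "mixture_free W"
  unfolding mixture_free_def
proof (intro allI impI notI)
  fix x :: 'x and r :: "'x \<Rightarrow> real"
  let ?\<delta> = "\<lambda>a. if a = x then 1 else 0 :: real"
  assume r: "prob_dist r \<and> r x = 0" and "chan_out W r = W x"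
  moreover have "prob_dist ?\<delta>"
    by (simp add: prob_dist_def)
  ultimately have "r = ?\<delta>"
    using inj chan_out_point_mass[of W x] by metis
  then show False
    using r by (metis zero_neq_one)
qed

lemma compact_prob_vectors_vanishing_at:
  "compact {v :: real^'n. (\<forall>i. 0 \<le> v$i) \<and> (\<Sum>i\<in>UNIV. v$i) = 1 \<and> v$x = 0}"
  (is "compact ?S")
proof -
  have "norm v \<le> 1" if "v \<in> ?S" for v
    using that norm_le_l1_cart[of v] by simp
  then have "bounded ?S"
    by (meson bounded_iff)
  moreover have "closed ?S"
    by (intro closed_Collect_conj closed_Collect_all closed_Collect_le closed_Collect_eq
        continuous_intros)
  ultimately show ?thesis
    by (simp add: compact_eq_bounded_closed)
qed

lemma compact_pos_imp_bounded_away_from_0: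
  fixes f :: "'a::topological_space \<Rightarrow> real"
  assumes "compact K" "continuous_on K f" "\<And>v. v \<in> K \<Longrightarrow> 0 < f v"
  shows "\<exists>\<eta>>0. \<forall>v\<in>K. \<eta> \<le> f v"
proof (cases "K = {}")
  case False
  then obtain v0 where "v0 \<in> K" "\<forall>v\<in>K. f v0 \<le> f v"
    using continuous_attains_inf[OF assms(1) _ assms(2)] by blast
  then show ?thesis
    using assms(3) by blast
qed (auto intro: zero_less_one)

lemma mixture_free_imp_l1_gap:
  fixes W :: "'x::finite \<Rightarrow> 'y::finite \<Rightarrow> real"
  assumes "mixture_free W"
  shows "\<exists>\<eta>>0. \<forall>r. prob_dist r \<and> r x = 0 \<longrightarrow> \<eta> \<le> l1_dist (W x) (chan_out W r)"
proof -
  define S where "S = {v :: real^'x. (\<forall>i. 0 \<le> v$i) \<and> (\<Sum>i\<in>UNIV. v$i) = 1 \<and> v$x = 0}"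
  define f where "f v = l1_dist (W x) (chan_out W (vec_nth v))" for v
  have "continuous_on S f"
    unfolding f_def l1_dist_def chan_out_def by (intro continuous_intros)
  moreover have "0 < f v" if "v \<in> S" for v
  proof -
    have "chan_out W (vec_nth v) \<noteq> W x"
      using assms that by (auto simp: mixture_free_def prob_dist_def S_def)
    then have "f v \<noteq> 0"
      by (simp add: f_def l1_dist_eq_0_iff)
    moreover have "f v \<ge> 0"
      by (simp add: f_def l1_dist_def sum_nonneg)
    ultimately show ?thesis
      by simp
  qed
  ultimately obtain \<eta> where "\<eta> > 0" "\<forall>v\<in>S. \<eta> \<le> f v"
    using compact_pos_imp_bounded_away_from_0 compact_prob_vectors_vanishing_at
    unfolding S_def by blast
  moreover have "vec_lambda r \<in> S" if "prob_dist r \<and> r x = 0" for r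
    using that by (simp add: S_def prob_dist_def)
  moreover have "f (vec_lambda r) = l1_dist (W x) (chan_out W r)" for r
    by (simp add: f_def vec_lambda_inverse)
  ultimately show ?thesis
    by metis
qed

lemma non_redundant_iff_mixture_free:
  fixes W :: "'x::finite \<Rightarrow> 'y::finite \<Rightarrow> real"
  shows "non_redundant W \<longleftrightarrow> mixture_free W"
proof
  assume "non_redundant W"
  then obtain \<eta> where "\<eta> > 0"
    and gap: "\<And>x r. prob_dist r \<and> r x = 0 \<Longrightarrow> \<eta> \<le> l1_dist (W x) (chan_out W r)"
    unfolding non_redundant_def by blast
  show "mixture_free W"
    unfolding mixture_free_def
  proof (intro allI impI notI)
    fix x r
    assume "prob_dist r \<and> r x = 0" "chan_out W r = W x"
    then show False
      using gap[of r x] \<open>\<eta> > 0\<close> l1_dist_eq_0_iff[of "W x" "W x"] by simp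
  qed
next
  assume "mixture_free W"
  then obtain e where e: "\<And>x. e x > 0"
    and gap: "\<And>x r. prob_dist r \<and> r x = 0 \<Longrightarrow> e x \<le> l1_dist (W x) (chan_out W r)"
    using mixture_free_imp_l1_gap by metis
  have "Min (range e) > 0" "\<And>x. Min (range e) \<le> e x"
    using e by auto
  then show "non_redundant W"
    unfolding non_redundant_def using gap by (meson order_trans)
qed

theorem proposition2:
  fixes W :: "'x::finite \<Rightarrow> 'y::finite \<Rightarrow> real"
  assumes "channel W" and "CARD('x) \<le> 3"
  shows "non_redundant W \<longleftrightarrow>
    (\<forall>p q. prob_dist p \<and> prob_dist q \<and> chan_out W p = chan_out W q \<longrightarrow> p = q)"
proof -
  have "mixture_free W \<longleftrightarrow>
    (\<forall>p q. prob_dist p \<and> prob_dist q \<and> chan_out W p = chan_out W q \<longrightarrow> p = q)"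
  proof
    assume "mixture_free W"
    then show "\<forall>p q. prob_dist p \<and> prob_dist q \<and> chan_out W p = chan_out W q \<longrightarrow> p = q"
      using mixture_free_imp_chan_out_inj[OF _ assms(2)] by blast
  qed (rule chan_out_inj_imp_mixture_free)
  then show ?thesis
    by (simp add: non_redundant_iff_mixture_free)
qed

end
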